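(* Let $A$ be a real sequence over $\mathbb{Z}^2$ with $|A|=3.99$, maximal multiplicity $\le\frac12$, and such that no line in $\mathbb{R}^2$ contains more than $\frac32$ points of $A$. Suppose there exists a line $\ell$ containing $\frac32$ points of $A$. Then $\Sigma^1_{\mathbb{R}}(A)$ contains a lattice point of $\mathbb{Z}^2$ in its interior.
   Context: A real sequence $A$ over $\mathbb{Z}^2$ is a family of pairs $(a_i,\mu_i)$ of distinct points $a_i\in\mathbb{Z}^2$ and non-negative reals $\mu_i$ (multiplicities); $|A|=\sum_i\mu_i$. A set $X$ contains $\sum_{i:a_i\in X}\mu_i$ points of $A$. $\Sigma^1_{\mathbb{R}}(A)=\{\sum_i t_ia_i : t_i\in[0,\mu_i],\ \sum_i t_i=1\}$. *)

theory Defs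
  imports "HOL-Analysis.Analysis"
begin

text \<open>A real sequence over Z^2 is represented by its multiplicity function
  mu :: int * int => real, nonnegative with finite support; the points of the
  sequence are the a with mu a > 0 (points of multiplicity 0 contribute nothing).\<close>

definition real_seq :: "(int \<times> int \<Rightarrow> real) \<Rightarrow> bool" where
  "real_seq mu \<longleftrightarrow> (\<forall>a. 0 \<le> mu a) \<and> finite {a. mu a \<noteq> 0}"

definition supp_seq :: "(int \<times> int \<Rightarrow> real) \<Rightarrow> (int \<times> int) set" where
  "supp_seq mu = {a. mu a \<noteq> 0}"

definition emb :: "int \<times> int \<Rightarrow> real \<times> real" where
  "emb a = (of_int (fst a), of_int (snd a))"

definition seq_size :: "(int \<times> int \<Rightarrow> real) \<Rightarrow> real" where
  "seq_size mu = (\<Sum>a\<in>supp_seq mu. mu a)"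

definition points_in :: "(int \<times> int \<Rightarrow> real) \<Rightarrow> (real \<times> real) set \<Rightarrow> real" where
  "points_in mu X = (\<Sum>a\<in>{a\<in>supp_seq mu. emb a \<in> X}. mu a)"

definition is_line :: "(real \<times> real) set \<Rightarrow> bool" where
  "is_line L \<longleftrightarrow> (\<exists>p v. v \<noteq> 0 \<and> L = {p + t *\<^sub>R v | t. True})"

definition Sigma1R :: "(int \<times> int \<Rightarrow> real) \<Rightarrow> (real \<times> real) set" where
  "Sigma1R mu = {(\<Sum>a\<in>supp_seq mu. t a *\<^sub>R emb a) | t.
      (\<forall>a\<in>supp_seq mu. 0 \<le> t a \<and> t a \<le> mu a) \<and> (\<Sum>a\<in>supp_seq mu. t a) = 1}"

end

theory Submission
  imports Defs
begin

(* Choose lattice coordinates (G, F) in which the line L carrying 3/2 points is the row F = 0;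
   this is possible because L passes through two lattice points. By the supporting hyperplane
   theorem a lattice point (n, j) lies in the interior of Sigma1R as soon as some coefficient
   vectors have barycentres strictly above and strictly below the row F = j, and strictly left
   and strictly right of (n, j) on that row. Above and below: normalise mu on the two closed
   half-planes bounded by L. Left and right: place a load of mass at most 1/2 with F-moment j
   off L, push it a little horizontally in both directions (the more than 2 points off L are not
   collinear, or two of them share a row), and complete the mass to 1 on L. Since L carries 3/2
   points of multiplicity at most 1/2 at distinct integer positions, its leftmost and its
   rightmost part of any mass in [1/2, 1] have G-moments at least 1 apart. *)

section \<open>Supporting hyperplanes\<close>

lemma mem_interior_convex_if_unsupported:
  fixes S :: "'a::euclidean_space set"
  assumes "convex S"
    and unsupported: "\<And>u. u \<noteq> 0 \<Longrightarrow> \<exists>x\<in>S. u \<bullet> z < u \<bullet> x"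
  shows "z \<in> interior S"
proof (rule ccontr)
  assume z: "z \<notin> interior S"
  obtain a where "a \<noteq> 0" and a: "\<And>x. x \<in> S \<Longrightarrow> a \<bullet> x \<le> a \<bullet> z"
  proof (cases "interior S = {}")
    case True
    then obtain a b where "a \<noteq> 0" and ab: "S \<subseteq> {x. a \<bullet> x = b}"
      using empty_interior_subset_hyperplane[OF \<open>convex S\<close>] by metis
    show thesis
    proof (cases "b \<le> a \<bullet> z")
      case True
      then show thesis using that[of a] \<open>a \<noteq> 0\<close> ab by auto
    next
      case False
      show thesis by (rule that[of "- a"]) (use \<open>a \<noteq> 0\<close> ab False in auto)
    qed
  next
    case False
    then have "z \<notin> rel_interior S"
      using z rel_interior_nonempty_interior by blast
    show thesis
    proof (cases "z \<in> closure S")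
      case True
      then obtain a where "a \<noteq> 0" "\<And>y. y \<in> closure S \<Longrightarrow> a \<bullet> z \<le> a \<bullet> y"
        using supporting_hyperplane_relative_frontier[OF \<open>convex S\<close>] \<open>z \<notin> rel_interior S\<close> by metis
      then show thesis by (intro that[of "- a"]) (use closure_subset in fastforce)+
    next
      case False
      have "convex (closure S)" "closed (closure S)" "closure S \<noteq> {}"
        using \<open>convex S\<close> \<open>interior S \<noteq> {}\<close> convex_closure interior_subset closure_subset by auto
      from supporting_hyperplane_closed_point[OF this False]
      obtain a b where "a \<bullet> z < b" "\<forall>x\<in>closure S. b \<le> a \<bullet> x" by blast
      moreover have "a \<noteq> 0"
        using calculation \<open>interior S \<noteq> {}\<close> interior_subset closure_subset by fastforce
      ultimately show thesis by (intro that[of "- a"]) (use closure_subset in fastforce)+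
    qed
  qed
  then show False using unsupported[of a] by force
qed

section \<open>Leftmost and rightmost parts of a weighted row\<close>

lemma exists_quantile_cut:
  fixes g :: "'a \<Rightarrow> int" and m :: "'a \<Rightarrow> real"
  assumes "finite R" and "0 < s" and "s \<le> (\<Sum>a\<in>R. m a)"
  obtains c where "c \<in> R" "(\<Sum>a\<in>{a\<in>R. g a < g c}. m a) < s" "s \<le> (\<Sum>a\<in>{a\<in>R. g a \<le> g c}. m a)"
proof -
  define C where "C = {c\<in>R. s \<le> (\<Sum>a\<in>{a\<in>R. g a \<le> g c}. m a)}"
  have "finite C" using \<open>finite R\<close> unfolding C_def by simp
  have "R \<noteq> {}" using assms(2,3) by auto
  define top where "top = arg_min_on (\<lambda>a. - g a) R"
  have "top \<in> R" and top: "\<forall>a\<in>R. g a \<le> g top"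
    using arg_min_if_finite[OF \<open>finite R\<close> \<open>R \<noteq> {}\<close>, of "\<lambda>a. - g a"] unfolding top_def by auto
  then have "{a\<in>R. g a \<le> g top} = R" by blast
  then have "top \<in> C" using \<open>top \<in> R\<close> assms(3) unfolding C_def by simp
  then have "C \<noteq> {}" by blast
  define c where "c = arg_min_on g C"
  have "c \<in> C" and least: "\<forall>c'\<in>C. g c \<le> g c'"
    using arg_min_if_finite[OF \<open>finite C\<close> \<open>C \<noteq> {}\<close>, of g] unfolding c_def by auto
  have "(\<Sum>a\<in>{a\<in>R. g a < g c}. m a) < s"
  proof (rule ccontr)
    let ?L = "{a\<in>R. g a < g c}"
    assume "\<not> (\<Sum>a\<in>?L. m a) < s"
    then have heavy: "s \<le> (\<Sum>a\<in>?L. m a)" by simp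
    then have "?L \<noteq> {}" using \<open>0 < s\<close> by (cases "?L = {}") auto
    define c' where "c' = arg_min_on (\<lambda>a. - g a) ?L"
    have "c' \<in> ?L" and c': "\<forall>a\<in>?L. g a \<le> g c'"
      using arg_min_if_finite[of ?L "\<lambda>a. - g a"] \<open>finite R\<close> \<open>?L \<noteq> {}\<close> unfolding c'_def by auto
    then have "{a\<in>R. g a \<le> g c'} = ?L" using c' by force
    then have "c' \<in> C" using \<open>c' \<in> ?L\<close> heavy unfolding C_def by simp
    then have "g c \<le> g c'" using least by blast
    then show False using \<open>c' \<in> ?L\<close> by simp
  qed
  moreover have "c \<in> R" "s \<le> (\<Sum>a\<in>{a\<in>R. g a \<le> g c}. m a)" using \<open>c \<in> C\<close> unfolding C_def by auto
  ultimately show thesis using that by blast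
qed

lemma lowest_mass_selection:
  fixes g :: "'a \<Rightarrow> int" and m :: "'a \<Rightarrow> real"
  assumes "finite R" and "inj_on g R" and nonneg: "\<forall>a\<in>R. 0 \<le> m a"
    and "0 < s" and "s \<le> (\<Sum>a\<in>R. m a)"
  obtains \<rho> c where "\<forall>a\<in>R. 0 \<le> \<rho> a \<and> \<rho> a \<le> m a" "(\<Sum>a\<in>R. \<rho> a) = s"
    "(\<Sum>a\<in>R. \<rho> a * of_int (g a)) = s * of_int c - (\<Sum>a\<in>R. m a * of_int (max 0 (c - g a)))"
proof -
  obtain a1 where "a1 \<in> R" and below: "(\<Sum>a\<in>{a\<in>R. g a < g a1}. m a) < s"
    and upto: "s \<le> (\<Sum>a\<in>{a\<in>R. g a \<le> g a1}. m a)"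
    using exists_quantile_cut[OF assms(1,4,5)] by blast
  define c where "c = g a1"
  define l where "l = (\<Sum>a\<in>{a\<in>R. g a < c}. m a)"
  have "{a\<in>R. g a \<le> c} = insert a1 {a\<in>R. g a < c}"
    using \<open>a1 \<in> R\<close> \<open>inj_on g R\<close> unfolding c_def inj_on_def by fastforce
  then have "s - l \<le> m a1" using upto \<open>finite R\<close> unfolding c_def l_def by simp
  define \<rho> where "\<rho> a = (if g a < c then m a else if a = a1 then s - l else 0)" for a
  have bounds: "\<forall>a\<in>R. 0 \<le> \<rho> a \<and> \<rho> a \<le> m a"
    using nonneg below \<open>s - l \<le> m a1\<close> unfolding \<rho>_def c_def l_def by auto
  have sums: "(\<Sum>a\<in>R. \<rho> a * f a) = (\<Sum>a\<in>{a\<in>R. g a < c}. m a * f a) + (s - l) * f a1" for f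
  proof -
    have "(\<Sum>a\<in>R. \<rho> a * f a)
        = (\<Sum>a\<in>R. (if g a < c then m a * f a else 0) + (if a = a1 then (s - l) * f a else 0))"
      by (intro sum.cong) (auto simp: \<rho>_def c_def)
    then show ?thesis using \<open>finite R\<close> \<open>a1 \<in> R\<close> by (simp add: sum.distrib sum.inter_filter)
  qed
  have "(\<Sum>a\<in>R. \<rho> a) = s"
    using sums[of "\<lambda>_. 1"] unfolding l_def by simp
  moreover have "(\<Sum>a\<in>R. \<rho> a * of_int (g a)) = s * of_int c - (\<Sum>a\<in>R. m a * of_int (max 0 (c - g a)))"
  proof -
    have "(\<Sum>a\<in>R. m a * of_int (max 0 (c - g a))) = (\<Sum>a\<in>{a\<in>R. g a < c}. m a * of_int (c - g a))"
      using \<open>finite R\<close> by (simp add: sum.inter_filter) (intro sum.cong, auto)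
    also have "\<dots> = of_int c * l - (\<Sum>a\<in>{a\<in>R. g a < c}. m a * of_int (g a))"
      unfolding l_def by (simp add: right_diff_distrib sum_subtractf sum_distrib_left mult.commute)
    finally show ?thesis using sums[of "\<lambda>a. of_int (g a)"] unfolding c_def by (simp add: algebra_simps)
  qed
  ultimately show thesis using bounds by (intro that)
qed

lemma sum_ge_level_except:
  fixes h :: "'a \<Rightarrow> int" and m :: "'a \<Rightarrow> real"
  assumes "finite R" and "E \<subseteq> R" and nonneg: "\<forall>a\<in>R. 0 \<le> m a"
    and near: "\<And>a. a \<in> R \<Longrightarrow> K - 1 \<le> h a" and far: "\<And>a. a \<in> R - E \<Longrightarrow> K \<le> h a"
  shows "of_int K * (\<Sum>a\<in>R. m a) - (\<Sum>a\<in>E. m a) \<le> (\<Sum>a\<in>R. m a * of_int (h a))"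
proof -
  have "(\<Sum>a\<in>R. of_int K * m a - (if a \<in> E then m a else 0)) \<le> (\<Sum>a\<in>R. m a * of_int (h a))"
  proof (rule sum_mono)
    fix a assume "a \<in> R"
    then have "of_int K - (if a \<in> E then 1 else 0) \<le> (of_int (h a) :: real)"
      using near[of a] far[of a] by (cases "a \<in> E") auto
    then have "m a * (of_int K - (if a \<in> E then 1 else 0)) \<le> m a * of_int (h a)"
      using nonneg \<open>a \<in> R\<close> by (intro mult_left_mono) auto
    then show "of_int K * m a - (if a \<in> E then m a else 0) \<le> m a * of_int (h a)"
      by (simp add: algebra_simps split: if_splits)
  qed
  moreover have "(\<Sum>a\<in>R. if a \<in> E then m a else 0) = (\<Sum>a\<in>E. m a)"
    using sum.inter_restrict[OF \<open>finite R\<close>, of m E] \<open>E \<subseteq> R\<close> by (simp add: Int_absorb1)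
  ultimately show ?thesis by (simp add: sum_subtractf flip: sum_distrib_left)
qed

text \<open>If the lowest and the highest part of mass s are cut at the labels lo and hi, the difference
  of their moments is the left-hand side below; the bound uses that the labels are distinct
  integers carrying mass at most 1/2 each.\<close>

lemma truncation_gap:
  fixes g :: "'a \<Rightarrow> int" and m :: "'a \<Rightarrow> real" and lo hi :: int
  assumes "finite R" and "inj_on g R" and bounds: "\<forall>a\<in>R. 0 \<le> m a \<and> m a \<le> 1/2"
    and total: "(\<Sum>a\<in>R. m a) = 3/2" and "1/2 \<le> s" and "s \<le> 1"
  shows "1 \<le> s * of_int (hi - lo) + (\<Sum>a\<in>R. m a * of_int (max 0 (lo - g a) + max 0 (g a - hi)))"
proof -
  define h where "h a = max 0 (lo - g a) + max 0 (g a - hi)" for a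
  define E where "E = {a\<in>R. g a = lo \<or> g a = hi}"
  have "E \<subseteq> R" "\<forall>a\<in>R. 0 \<le> m a" using bounds unfolding E_def by auto
  note level = sum_ge_level_except[OF \<open>finite R\<close> this, of _ h, unfolded total]
  have E_mass: "(\<Sum>a\<in>E. m a) \<le> of_nat (card {lo, hi}) / 2"
  proof -
    have "card E \<le> card {lo, hi}"
      using \<open>inj_on g R\<close> by (intro card_inj_on_le[of g]) (auto simp: E_def inj_on_def)
    moreover have "(\<Sum>a\<in>E. m a) \<le> of_nat (card E) * (1/2)"
      using bounds by (intro sum_bounded_above) (auto simp: E_def)
    ultimately show ?thesis by linarith
  qed
  have "0 \<le> (\<Sum>a\<in>R. m a * of_int (h a))"
    using bounds by (intro sum_nonneg) (auto simp: h_def)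
  consider "lo + 2 \<le> hi" | "hi = lo + 1" | "hi = lo" | "hi = lo - 1" | "hi \<le> lo - 2" by linarith
  then have "1 \<le> s * of_int (hi - lo) + (\<Sum>a\<in>R. m a * of_int (h a))"
  proof cases
    case 1
    then have "s * 2 \<le> s * of_int (hi - lo)" using \<open>1/2 \<le> s\<close> by (intro mult_left_mono) auto
    then show ?thesis using \<open>0 \<le> (\<Sum>a\<in>R. m a * of_int (h a))\<close> \<open>1/2 \<le> s\<close> by linarith
  next
    case 2
    have "of_int 1 * (3/2) - (\<Sum>a\<in>E. m a) \<le> (\<Sum>a\<in>R. m a * of_int (h a))"
      by (rule level) (use 2 in \<open>auto simp: h_def E_def max_def\<close>)
    then show ?thesis using 2 E_mass \<open>1/2 \<le> s\<close> by (simp add: card_insert_if)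
  next
    case 3
    have "of_int 1 * (3/2) - (\<Sum>a\<in>E. m a) \<le> (\<Sum>a\<in>R. m a * of_int (h a))"
      by (rule level) (use 3 in \<open>auto simp: h_def E_def max_def\<close>)
    then show ?thesis using 3 E_mass by simp
  next
    case 4
    have "of_int 2 * (3/2) - (\<Sum>a\<in>E. m a) \<le> (\<Sum>a\<in>R. m a * of_int (h a))"
      by (rule level) (use 4 in \<open>auto simp: h_def E_def max_def\<close>)
    then show ?thesis using 4 E_mass \<open>s \<le> 1\<close> by (simp add: card_insert_if)
  next
    case 5
    have "(\<Sum>a\<in>R. m a * of_int (lo - hi)) \<le> (\<Sum>a\<in>R. m a * of_int (h a))"
      using bounds 5 by (intro sum_mono mult_left_mono) (auto simp: h_def)
    then have "of_int (lo - hi) * (3/2) \<le> (\<Sum>a\<in>R. m a * of_int (h a))"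
      using total by (simp add: sum_distrib_right[symmetric] mult.commute)
    moreover have "1 \<le> of_int (lo - hi) * (3/2 - s)"
      using 5 \<open>s \<le> 1\<close> mult_mono[of 2 "of_int (lo - hi)" "1/2" "3/2 - s"] by simp
    moreover have "of_int (lo - hi) * (3/2 - s) = of_int (lo - hi) * (3/2) + s * of_int (hi - lo)"
      by (simp add: algebra_simps)
    ultimately show ?thesis by linarith
  qed
  then show ?thesis unfolding h_def .
qed

lemma spread_pair:
  fixes g :: "'a \<Rightarrow> int" and m :: "'a \<Rightarrow> real"
  assumes "finite R" and "inj_on g R" and bounds: "\<forall>a\<in>R. 0 \<le> m a \<and> m a \<le> 1/2"
    and total: "(\<Sum>a\<in>R. m a) = 3/2" and "1/2 \<le> s" and "s \<le> 1"
  obtains \<rho>1 \<rho>2 where "\<forall>a\<in>R. 0 \<le> \<rho>1 a \<and> \<rho>1 a \<le> m a" "\<forall>a\<in>R. 0 \<le> \<rho>2 a \<and> \<rho>2 a \<le> m a"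
    "(\<Sum>a\<in>R. \<rho>1 a) = s" "(\<Sum>a\<in>R. \<rho>2 a) = s"
    "1 \<le> (\<Sum>a\<in>R. \<rho>2 a * of_int (g a)) - (\<Sum>a\<in>R. \<rho>1 a * of_int (g a))"
proof -
  have nonneg: "\<forall>a\<in>R. 0 \<le> m a" and "0 < s" and s_le: "s \<le> (\<Sum>a\<in>R. m a)"
    using bounds total assms(5,6) by auto
  obtain \<rho>1 c1 where \<rho>1: "\<forall>a\<in>R. 0 \<le> \<rho>1 a \<and> \<rho>1 a \<le> m a" "(\<Sum>a\<in>R. \<rho>1 a) = s"
    "(\<Sum>a\<in>R. \<rho>1 a * of_int (g a)) = s * of_int c1 - (\<Sum>a\<in>R. m a * of_int (max 0 (c1 - g a)))"
    by (rule lowest_mass_selection[OF assms(1,2) nonneg \<open>0 < s\<close> s_le])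
  have "inj_on (\<lambda>a. - g a) R" using \<open>inj_on g R\<close> by (simp add: inj_on_def)
  then obtain \<rho>2 c where \<rho>2: "\<forall>a\<in>R. 0 \<le> \<rho>2 a \<and> \<rho>2 a \<le> m a" "(\<Sum>a\<in>R. \<rho>2 a) = s"
    "(\<Sum>a\<in>R. \<rho>2 a * of_int (- g a)) = s * of_int c - (\<Sum>a\<in>R. m a * of_int (max 0 (c - - g a)))"
    by (rule lowest_mass_selection[OF assms(1) _ nonneg \<open>0 < s\<close> s_le])
  have "(\<Sum>a\<in>R. \<rho>2 a * of_int (g a)) = s * of_int (- c) + (\<Sum>a\<in>R. m a * of_int (max 0 (g a - - c)))"
    using \<rho>2(3) by (simp add: sum_negf add.commute)
  then have "(\<Sum>a\<in>R. \<rho>2 a * of_int (g a)) - (\<Sum>a\<in>R. \<rho>1 a * of_int (g a))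
      = s * of_int (- c - c1) + ((\<Sum>a\<in>R. m a * of_int (max 0 (c1 - g a))) + (\<Sum>a\<in>R. m a * of_int (max 0 (g a - - c))))"
    using \<rho>1(3) by (simp add: algebra_simps)
  also have "\<dots> = s * of_int (- c - c1) + (\<Sum>a\<in>R. m a * of_int (max 0 (c1 - g a) + max 0 (g a - - c)))"
    by (simp add: sum.distrib distrib_left)
  finally have "1 \<le> (\<Sum>a\<in>R. \<rho>2 a * of_int (g a)) - (\<Sum>a\<in>R. \<rho>1 a * of_int (g a))"
    using truncation_gap[where lo=c1 and hi="- c", OF assms] by linarith
  from \<rho>1(1) \<rho>2(1) \<rho>1(2) \<rho>2(2) this show thesis by (rule that)
qed

lemma two_points_if_heavy:
  fixes m :: "'a \<Rightarrow> real"
  assumes "0 \<le> c" and "\<forall>a\<in>B. m a \<le> c" and "c < (\<Sum>a\<in>B. m a)"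
  obtains p q where "p \<in> B" "q \<in> B" "p \<noteq> q"
proof -
  obtain p where "p \<in> B" using assms(1,3) by fastforce
  show thesis
  proof (cases "B = {p}")
    case True
    then show thesis using assms(2,3) by simp
  next
    case False
    then show thesis using \<open>p \<in> B\<close> that by blast
  qed
qed

lemma sum_filter_split:
  "finite A \<Longrightarrow> sum f A = (\<Sum>a\<in>{a\<in>A. P a}. f a) + (\<Sum>a\<in>{a\<in>A. \<not> P a}. f a)"
  by (simp add: sum.inter_filter flip: sum.distrib) (rule sum.cong, auto)

lemma exists_uniform_scale:
  fixes w b :: "'a \<Rightarrow> real"
  assumes "finite {a. w a \<noteq> 0}" and "\<forall>a. 0 \<le> b a" and "\<forall>a. w a \<noteq> 0 \<longrightarrow> 0 < b a"
  obtains \<delta> where "0 < \<delta>" "\<forall>a. \<delta> * \<bar>w a\<bar> \<le> b a"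
proof
  define \<delta> where "\<delta> = Min (insert 1 ((\<lambda>a. b a / \<bar>w a\<bar>) ` {a. w a \<noteq> 0}))"
  show "0 < \<delta>" unfolding \<delta>_def using assms by (simp add: Min_gr_iff)
  show "\<forall>a. \<delta> * \<bar>w a\<bar> \<le> b a"
  proof
    fix a
    show "\<delta> * \<bar>w a\<bar> \<le> b a"
    proof (cases "w a = 0")
      case True
      then show ?thesis using assms(2) by simp
    next
      case False
      then have "\<delta> \<le> b a / \<bar>w a\<bar>" unfolding \<delta>_def using assms(1) by (intro Min_le) auto
      then show ?thesis using False by (simp add: le_divide_eq)
    qed
  qed
qed

lemma sum_zero_extension:
  fixes \<rho> f :: "'a \<Rightarrow> real"
  assumes "finite A" and "R \<subseteq> A"
  shows "(\<Sum>a\<in>A. (if a \<in> R then \<rho> a else 0) * f a) = (\<Sum>a\<in>R. \<rho> a * f a)"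
proof -
  have "(\<Sum>a\<in>A. (if a \<in> R then \<rho> a else 0) * f a) = (\<Sum>a\<in>A. if a \<in> R then \<rho> a * f a else 0)"
    by (intro sum.cong) auto
  then show ?thesis using sum.inter_restrict[OF assms(1), of "\<lambda>a. \<rho> a * f a" R] assms(2)
    by (simp add: Int_absorb1)
qed

section \<open>Lines and lattice directions\<close>

lemma is_line_hyperplane:
  fixes u :: "real \<times> real"
  assumes "u \<noteq> 0"
  shows "is_line {z. u \<bullet> z = c}"
proof -
  define N where "N = u \<bullet> u"
  define v where "v = (- snd u, fst u)"
  define p where "p = (c / N) *\<^sub>R u"
  have "N \<noteq> 0" using assms unfolding N_def by simp
  have "u \<bullet> v = 0" unfolding v_def by (cases u) (simp add: algebra_simps)
  have "{z. u \<bullet> z = c} = {p + t *\<^sub>R v | t. True}"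
  proof (intro set_eqI iffI)
    fix z :: "real \<times> real" assume "z \<in> {z. u \<bullet> z = c}"
    have "N *\<^sub>R z = (u \<bullet> z) *\<^sub>R u + (v \<bullet> z) *\<^sub>R v"
      unfolding N_def v_def by (cases u, cases z) (simp add: algebra_simps)
    then have "z = (1 / N) *\<^sub>R ((u \<bullet> z) *\<^sub>R u + (v \<bullet> z) *\<^sub>R v)"
      using \<open>N \<noteq> 0\<close> by (metis divide_self_if scaleR_one scaleR_scaleR times_divide_eq_left mult_1)
    then have "z = p + ((v \<bullet> z) / N) *\<^sub>R v"
      using \<open>z \<in> {z. u \<bullet> z = c}\<close> unfolding p_def by (simp add: scaleR_add_right)
    then show "z \<in> {p + t *\<^sub>R v | t. True}" by blast
  next
    fix z assume "z \<in> {p + t *\<^sub>R v | t. True}"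
    then obtain t where "z = p + t *\<^sub>R v" by blast
    then show "z \<in> {z. u \<bullet> z = c}"
      using \<open>N \<noteq> 0\<close> \<open>u \<bullet> v = 0\<close> unfolding p_def N_def by (simp add: inner_add_right)
  qed
  moreover have "v \<noteq> 0" using assms unfolding v_def by (cases u) (auto simp: zero_prod_def)
  ultimately show ?thesis unfolding is_line_def by blast
qed

lemma primitive_direction:
  fixes d1 d2 :: int
  assumes "(d1, d2) \<noteq> (0, 0)"
  obtains g v1 v2 x y where "d1 = g * v1" "d2 = g * v2" "x * v1 + y * v2 = 1"
proof -
  define g where "g = gcd d1 d2"
  have "g dvd d1" "g dvd d2" unfolding g_def by simp_all
  then obtain v1 v2 where v: "d1 = g * v1" "d2 = g * v2" by (metis dvdE)
  have "g \<noteq> 0" using assms unfolding g_def by simp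
  have "gcd v1 v2 = 1"
    using v \<open>g \<noteq> 0\<close> unfolding g_def by (metis gcd_mult_distrib_int abs_gcd_int mult_cancel_left1 abs_mult_self_eq gcd_ge_0_int)
  then obtain x y where "x * v1 + y * v2 = 1" using bezout_int[of v1 v2] by auto
  with v show thesis by (rule that)
qed

section \<open>Feasible coefficient vectors and their moments\<close>

definition mass :: "(int \<times> int \<Rightarrow> real) \<Rightarrow> (int \<times> int \<Rightarrow> real) \<Rightarrow> real" where
  "mass mu t = (\<Sum>a\<in>supp_seq mu. t a)"

definition moment :: "(int \<times> int \<Rightarrow> real) \<Rightarrow> (int \<times> int \<Rightarrow> real) \<Rightarrow> (int \<times> int \<Rightarrow> int) \<Rightarrow> real" where
  "moment mu t f = (\<Sum>a\<in>supp_seq mu. t a * of_int (f a))"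

text \<open>The coefficient vectors of Sigma1R. Bounding t by mu at every point (not only on the
  support) makes t vanish off the support, so sums over the support lose nothing.\<close>

definition feasible :: "(int \<times> int \<Rightarrow> real) \<Rightarrow> (int \<times> int \<Rightarrow> real) \<Rightarrow> bool" where
  "feasible mu t \<longleftrightarrow> (\<forall>a. 0 \<le> t a \<and> t a \<le> mu a) \<and> mass mu t = 1"

text \<open>Supporting-hyperplane form of: (n, j) is an interior point of the set of pairs
  (moment mu t G, moment mu t F) with t feasible. In the coordinates (G, F) of
  unimodular_frame this set is Sigma1R.\<close>

definition moment_interior ::
    "(int \<times> int \<Rightarrow> real) \<Rightarrow> (int \<times> int \<Rightarrow> int) \<Rightarrow> (int \<times> int \<Rightarrow> int) \<Rightarrow> int \<Rightarrow> int \<Rightarrow> bool" where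
  "moment_interior mu G F n j \<longleftrightarrow> (\<forall>\<alpha> \<beta>. (\<alpha>, \<beta>) \<noteq> (0, 0) \<longrightarrow>
     (\<exists>t. feasible mu t \<and> 0 < \<alpha> * (moment mu t G - of_int n) + \<beta> * (moment mu t F - of_int j)))"

lemma convex_Sigma1R: "convex (Sigma1R mu)"
  unfolding convex_def
proof (intro ballI allI impI)
  fix x y and u v :: real
  assume "x \<in> Sigma1R mu" "y \<in> Sigma1R mu" and uv: "0 \<le> u" "0 \<le> v" "u + v = 1"
  then obtain t1 t2 where x: "x = (\<Sum>a\<in>supp_seq mu. t1 a *\<^sub>R emb a)"
      "\<forall>a\<in>supp_seq mu. 0 \<le> t1 a \<and> t1 a \<le> mu a" "(\<Sum>a\<in>supp_seq mu. t1 a) = 1"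
    and y: "y = (\<Sum>a\<in>supp_seq mu. t2 a *\<^sub>R emb a)"
      "\<forall>a\<in>supp_seq mu. 0 \<le> t2 a \<and> t2 a \<le> mu a" "(\<Sum>a\<in>supp_seq mu. t2 a) = 1"
    unfolding Sigma1R_def by blast
  define t where "t a = u * t1 a + v * t2 a" for a
  have "u *\<^sub>R x + v *\<^sub>R y = (\<Sum>a\<in>supp_seq mu. t a *\<^sub>R emb a)"
    unfolding x(1) y(1) t_def by (simp add: scaleR_sum_right sum.distrib scaleR_add_left)
  moreover have "\<forall>a\<in>supp_seq mu. 0 \<le> t a \<and> t a \<le> mu a"
  proof
    fix a assume "a \<in> supp_seq mu"
    then have "u * t1 a \<le> u * mu a" "v * t2 a \<le> v * mu a" "0 \<le> u * t1 a" "0 \<le> v * t2 a"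
      using x(2) y(2) uv by (auto intro: mult_left_mono)
    then show "0 \<le> t a \<and> t a \<le> mu a"
      unfolding t_def using uv by (metis add_mono add_nonneg_nonneg distrib_right mult_1)
  qed
  moreover have "(\<Sum>a\<in>supp_seq mu. t a) = 1"
    unfolding t_def using x(3) y(3) uv by (simp add: sum.distrib flip: sum_distrib_left)
  ultimately show "u *\<^sub>R x + v *\<^sub>R y \<in> Sigma1R mu" unfolding Sigma1R_def by blast
qed

lemma feasible_combination_in_Sigma1R:
  "feasible mu t \<Longrightarrow> (\<Sum>a\<in>supp_seq mu. t a *\<^sub>R emb a) \<in> Sigma1R mu"
  unfolding feasible_def mass_def Sigma1R_def by blast

lemma mass_add: "mass mu (\<lambda>a. s a + t a) = mass mu s + mass mu t"
  and mass_cmult: "mass mu (\<lambda>a. c * t a) = c * mass mu t"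
  unfolding mass_def by (simp_all add: sum.distrib sum_distrib_left)

lemma moment_add: "moment mu (\<lambda>a. s a + t a) f = moment mu s f + moment mu t f"
  and moment_cmult: "moment mu (\<lambda>a. c * t a) f = c * moment mu t f"
  unfolding moment_def by (simp_all add: algebra_simps sum.distrib sum_distrib_left)

lemma exists_feasible_average:
  assumes "real_seq mu" and "T \<subseteq> supp_seq mu" and "1 \<le> (\<Sum>a\<in>T. mu a)"
  obtains t where "feasible mu t" "moment mu t f = (\<Sum>a\<in>T. mu a * of_int (f a)) / (\<Sum>a\<in>T. mu a)"
proof
  let ?M = "\<Sum>a\<in>T. mu a"
  define t where "t a = (if a \<in> T then mu a / ?M else 0)" for a
  have "finite (supp_seq mu)" using assms(1) unfolding real_seq_def supp_seq_def by simp
  have restrict: "(\<Sum>a\<in>supp_seq mu. t a * g a) = (\<Sum>a\<in>T. mu a * g a) / ?M" for g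
    using sum_zero_extension[OF \<open>finite (supp_seq mu)\<close> assms(2), of "\<lambda>a. mu a / ?M" g]
    unfolding t_def by (simp add: sum_divide_distrib)
  then show "moment mu t f = (\<Sum>a\<in>T. mu a * of_int (f a)) / ?M" unfolding moment_def .
  have "0 \<le> mu a" for a using assms(1) unfolding real_seq_def by blast
  moreover have "mu a / ?M \<le> mu a / 1" for a
    using \<open>0 \<le> mu a\<close> assms(3) by (intro divide_left_mono) auto
  ultimately have "\<forall>a. 0 \<le> t a \<and> t a \<le> mu a"
    using assms(3) unfolding t_def by simp
  moreover have "mass mu t = 1" using restrict[of "\<lambda>_. 1"] assms(3) unfolding mass_def by simp
  ultimately show "feasible mu t" unfolding feasible_def by blast
qed

lemma moment_interior_if_surrounded:
  assumes "feasible mu \<nu>1" "feasible mu \<nu>2" "feasible mu \<nu>u" "feasible mu \<nu>d"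
    and "moment mu \<nu>1 F = of_int j" "moment mu \<nu>2 F = of_int j"
    and "moment mu \<nu>1 G < of_int n" "of_int n < moment mu \<nu>2 G"
    and "moment mu \<nu>d F < of_int j" "of_int j < moment mu \<nu>u F"
  shows "moment_interior mu G F n j"
  unfolding moment_interior_def
proof (intro allI impI)
  fix \<alpha> \<beta> :: real
  assume "(\<alpha>, \<beta>) \<noteq> (0, 0)"
  then consider "0 < \<alpha>" | "\<alpha> < 0" | "\<alpha> = 0" "0 < \<beta>" | "\<alpha> = 0" "\<beta> < 0" by fastforce
  then show "\<exists>t. feasible mu t \<and> 0 < \<alpha> * (moment mu t G - of_int n) + \<beta> * (moment mu t F - of_int j)"
  proof cases
    case 1
    then show ?thesis using assms(2,6,8) by (intro exI[of _ \<nu>2]) simp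
  next
    case 2
    then show ?thesis using assms(1,5,7) by (intro exI[of _ \<nu>1]) (simp add: mult_neg_neg)
  next
    case 3
    then show ?thesis using assms(3,10) by (intro exI[of _ \<nu>u]) simp
  next
    case 4
    then show ?thesis using assms(4,9) by (intro exI[of _ \<nu>d]) (simp add: mult_neg_neg)
  qed
qed

lemma moment_interior_mirror:
  assumes "moment_interior mu (\<lambda>a. - G a) (\<lambda>a. - F a) n j"
  shows "moment_interior mu G F (- n) (- j)"
  unfolding moment_interior_def
proof (intro allI impI)
  fix \<alpha> \<beta> :: real
  assume "(\<alpha>, \<beta>) \<noteq> (0, 0)"
  then have "(- \<alpha>, - \<beta>) \<noteq> (0, 0)" by simp
  then obtain t where "feasible mu t"
    "0 < - \<alpha> * (moment mu t (\<lambda>a. - G a) - of_int n) + - \<beta> * (moment mu t (\<lambda>a. - F a) - of_int j)"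
    using assms unfolding moment_interior_def by blast
  moreover have "moment mu t (\<lambda>a. - f a) = - moment mu t f" for f
    unfolding moment_def by (simp add: sum_negf)
  ultimately show "\<exists>t. feasible mu t \<and> 0 < \<alpha> * (moment mu t G - of_int (- n)) + \<beta> * (moment mu t F - of_int (- j))"
    by (intro exI[of _ t]) (simp add: algebra_simps)
qed

section \<open>Lattice coordinates adapted to a line\<close>

locale unimodular_frame =
  fixes p :: "int \<times> int" and v1 v2 x y :: int
  assumes unimodular: "x * v1 + y * v2 = 1"
begin

text \<open>(G a, F a) are the coordinates of a - p in the lattice basis (v1, v2), (-y, x),
  whose determinant is x * v1 + y * v2 = 1.\<close>

definition G :: "int \<times> int \<Rightarrow> int" where
  "G a = x * (fst a - fst p) + y * (snd a - snd p)"

definition F :: "int \<times> int \<Rightarrow> int" where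
  "F a = v1 * (snd a - snd p) - v2 * (fst a - fst p)"

lemma G_F_inj:
  assumes "G a = G b" and "F a = F b"
  shows "a = b"
proof -
  define d1 d2 where "d1 = fst a - fst b" and "d2 = snd a - snd b"
  have G0: "x * d1 + y * d2 = 0" and F0: "v1 * d2 - v2 * d1 = 0"
    using assms unfolding G_def F_def d1_def d2_def by (simp_all add: algebra_simps)
  have "d1 = d1 * (x * v1 + y * v2)" using unimodular by simp
  also have "\<dots> = v1 * (x * d1 + y * d2) - y * (v1 * d2 - v2 * d1)" by (simp add: algebra_simps)
  finally have "d1 = 0" unfolding G0 F0 by simp
  have "d2 = d2 * (x * v1 + y * v2)" using unimodular by simp
  also have "\<dots> = v2 * (x * d1 + y * d2) + x * (v1 * d2 - v2 * d1)" by (simp add: algebra_simps)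
  finally have "d2 = 0" unfolding G0 F0 by simp
  with \<open>d1 = 0\<close> show ?thesis unfolding d1_def d2_def by (simp add: prod_eq_iff)
qed

lemma exists_point_with_coords:
  obtains z where "G z = n" "F z = j"
proof
  define z where "z = (fst p + n * v1 - j * y, snd p + n * v2 + j * x)"
  have "G z = n * (x * v1 + y * v2)" "F z = j * (x * v1 + y * v2)"
    unfolding G_def F_def z_def by (simp_all add: algebra_simps)
  then show "G z = n" "F z = j" using unimodular by simp_all
qed

lemma inner_emb_diff:
  fixes u :: "real \<times> real"
  shows "u \<bullet> (emb a - emb b)
    = (u \<bullet> (of_int v1, of_int v2)) * of_int (G a - G b) + (u \<bullet> (- of_int y, of_int x)) * of_int (F a - F b)"
proof -
  obtain u1 u2 where u: "u = (u1, u2)" by fastforce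
  have "(u \<bullet> (of_int v1, of_int v2)) * of_int (G a - G b) + (u \<bullet> (- of_int y, of_int x)) * of_int (F a - F b)
      = (u \<bullet> (emb a - emb b)) * of_int (x * v1 + y * v2)"
    unfolding u G_def F_def emb_def by (simp add: algebra_simps)
  then show ?thesis using unimodular by simp
qed

lemma frame_functionals_nonzero:
  fixes u :: "real \<times> real"
  assumes "u \<noteq> 0"
  shows "(u \<bullet> (of_int v1, of_int v2), u \<bullet> (- of_int y, of_int x)) \<noteq> (0, 0)"
proof
  obtain u1 u2 :: real where u: "u = (u1, u2)" by fastforce
  assume "(u \<bullet> (of_int v1, of_int v2), u \<bullet> (- of_int y, of_int x)) = (0, 0)"
  then have V: "u1 * of_int v1 + u2 * of_int v2 = 0" and W: "u2 * of_int x - u1 * of_int y = 0"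
    unfolding u by (simp_all add: algebra_simps)
  have "u1 = u1 * of_int (x * v1 + y * v2)" using unimodular by simp
  also have "\<dots> = of_int x * (u1 * of_int v1 + u2 * of_int v2) - of_int v2 * (u2 * of_int x - u1 * of_int y)"
    by (simp add: algebra_simps)
  finally have "u1 = 0" unfolding V W by simp
  have "u2 = u2 * of_int (x * v1 + y * v2)" using unimodular by simp
  also have "\<dots> = of_int y * (u1 * of_int v1 + u2 * of_int v2) + of_int v1 * (u2 * of_int x - u1 * of_int y)"
    by (simp add: algebra_simps)
  finally have "u2 = 0" unfolding V W by simp
  with \<open>u1 = 0\<close> show False using assms u by (simp add: zero_prod_def)
qed

lemma level_set_is_line:
  fixes \<alpha> \<beta> \<gamma> :: real
  assumes "(\<alpha>, \<beta>) \<noteq> (0, 0)"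
  obtains L where "is_line L" "\<And>a. emb a \<in> L \<longleftrightarrow> \<alpha> * of_int (G a) + \<beta> * of_int (F a) = \<gamma>"
proof
  define u where "u = (\<alpha> * of_int x - \<beta> * of_int v2, \<alpha> * of_int y + \<beta> * of_int v1)"
  have "u \<bullet> (of_int v1, of_int v2) = \<alpha> * of_int (x * v1 + y * v2)"
    and "u \<bullet> (- of_int y, of_int x) = \<beta> * of_int (x * v1 + y * v2)"
    unfolding u_def by (simp_all add: algebra_simps)
  then have "u \<noteq> 0" using assms unimodular by auto
  then show "is_line {z. u \<bullet> z = \<gamma> + u \<bullet> emb p}" by (rule is_line_hyperplane)
  fix a
  have "u \<bullet> emb a - u \<bullet> emb p = \<alpha> * of_int (G a) + \<beta> * of_int (F a)"
    unfolding u_def G_def F_def emb_def by (simp add: algebra_simps)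
  then show "emb a \<in> {z. u \<bullet> z = \<gamma> + u \<bullet> emb p} \<longleftrightarrow> \<alpha> * of_int (G a) + \<beta> * of_int (F a) = \<gamma>"
    by auto
qed

lemma F_vanishes_on_line:
  assumes "is_line L" and "emb p \<in> L" "emb q \<in> L" "emb a \<in> L" and "q \<noteq> p" "F q = 0"
  shows "F a = 0"
proof -
  define Y :: "real \<times> real" where "Y = (- of_int v2, of_int v1)"
  have F_inner: "of_int (F b) = Y \<bullet> (emb b - emb p)" for b
    unfolding Y_def F_def emb_def by (simp add: algebra_simps)
  obtain P D where L: "L = {P + t *\<^sub>R D | t. True}" using \<open>is_line L\<close> unfolding is_line_def by blast
  obtain ta tp tq where "emb a = P + ta *\<^sub>R D" "emb p = P + tp *\<^sub>R D" "emb q = P + tq *\<^sub>R D"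
    using assms(2-4) unfolding L by blast
  then have diff: "emb b - emb p = (t - tp) *\<^sub>R D" if "emb b = P + t *\<^sub>R D" for b t
    using that by (simp add: algebra_simps)
  have "emb q \<noteq> emb p" using \<open>q \<noteq> p\<close> unfolding emb_def by (simp add: prod_eq_iff)
  then have "tq \<noteq> tp" using \<open>emb p = _\<close> \<open>emb q = _\<close> by auto
  moreover have "(tq - tp) * (Y \<bullet> D) = 0"
    using F_inner[of q] diff[OF \<open>emb q = _\<close>] \<open>F q = 0\<close> by simp
  ultimately have "Y \<bullet> D = 0" by simp
  then show ?thesis using F_inner[of a] diff[OF \<open>emb a = _\<close>] by simp
qed

lemma emb_in_interior_Sigma1R:
  assumes "moment_interior mu G F (G z) (F z)"
  shows "emb z \<in> interior (Sigma1R mu)"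
proof (rule mem_interior_convex_if_unsupported[OF convex_Sigma1R])
  fix u :: "real \<times> real"
  assume "u \<noteq> 0"
  define \<alpha> \<beta> where "\<alpha> = u \<bullet> (of_int v1, of_int v2)" and "\<beta> = u \<bullet> (- of_int y, of_int x)"
  obtain t where "feasible mu t"
    and pos: "0 < \<alpha> * (moment mu t G - of_int (G z)) + \<beta> * (moment mu t F - of_int (F z))"
    using assms frame_functionals_nonzero[OF \<open>u \<noteq> 0\<close>] unfolding moment_interior_def \<alpha>_def \<beta>_def by blast
  define X where "X = (\<Sum>a\<in>supp_seq mu. t a *\<^sub>R emb a)"
  have "(\<Sum>a\<in>supp_seq mu. t a) = 1" using \<open>feasible mu t\<close> unfolding feasible_def mass_def by simp
  then have "u \<bullet> X - u \<bullet> emb z = (\<Sum>a\<in>supp_seq mu. t a * (u \<bullet> (emb a - emb z)))"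
    unfolding X_def by (simp add: inner_sum_right inner_diff_right right_diff_distrib sum_subtractf
        flip: sum_distrib_right)
  also have "\<dots> = (\<Sum>a\<in>supp_seq mu. \<alpha> * (t a * of_int (G a)) + \<beta> * (t a * of_int (F a))
      - (\<alpha> * of_int (G z) + \<beta> * of_int (F z)) * t a)"
    unfolding inner_emb_diff \<alpha>_def[symmetric] \<beta>_def[symmetric] by (intro sum.cong) (simp_all add: algebra_simps)
  also have "\<dots> = \<alpha> * moment mu t G + \<beta> * moment mu t F - (\<alpha> * of_int (G z) + \<beta> * of_int (F z)) * (\<Sum>a\<in>supp_seq mu. t a)"
    unfolding moment_def by (simp add: sum_subtractf sum.distrib sum_distrib_left)
  also have "\<dots> = \<alpha> * (moment mu t G - of_int (G z)) + \<beta> * (moment mu t F - of_int (F z))"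
    using \<open>(\<Sum>a\<in>supp_seq mu. t a) = 1\<close> by (simp add: algebra_simps)
  finally show "\<exists>x\<in>Sigma1R mu. u \<bullet> emb z < u \<bullet> x"
    using pos feasible_combination_in_Sigma1R[OF \<open>feasible mu t\<close>] unfolding X_def by force
qed

end

section \<open>Sequences whose heaviest line is the row F = 0\<close>

locale framed_seq =
  fixes mu :: "int \<times> int \<Rightarrow> real" and G F :: "int \<times> int \<Rightarrow> int"
  assumes real_seq: "real_seq mu"
    and half: "\<And>a. mu a \<le> 1/2"
    and heavy: "7/2 < seq_size mu"
    and G_F_inj: "\<And>a b. G a = G b \<Longrightarrow> F a = F b \<Longrightarrow> a = b"
    and lines: "\<And>\<alpha> \<beta> \<gamma> :: real. (\<alpha>, \<beta>) \<noteq> (0, 0) \<Longrightarrow>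
      (\<Sum>a\<in>{a\<in>supp_seq mu. \<alpha> * of_int (G a) + \<beta> * of_int (F a) = \<gamma>}. mu a) \<le> 3/2"
    and row: "(\<Sum>a\<in>{a\<in>supp_seq mu. F a = 0}. mu a) = 3/2"
begin

lemma nonneg: "0 \<le> mu a"
  using real_seq unfolding real_seq_def by blast

lemma finite_supp: "finite (supp_seq mu)"
  using real_seq unfolding real_seq_def supp_seq_def by blast

lemma supp_pos: "a \<in> supp_seq mu \<longleftrightarrow> 0 < mu a"
  using nonneg[of a] unfolding supp_seq_def by auto

lemma total_mass_gt: "7/2 < (\<Sum>a\<in>supp_seq mu. mu a)"
  using heavy unfolding seq_size_def .

lemma scaled_restriction_sum:
  "(\<Sum>a\<in>supp_seq mu. (if P a then c * mu a else 0) * f a) = c * (\<Sum>a\<in>{a\<in>supp_seq mu. P a}. mu a * f a)"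
proof -
  have "(\<Sum>a\<in>supp_seq mu. (if P a then c * mu a else 0) * f a)
      = (\<Sum>a\<in>supp_seq mu. c * (if P a then mu a * f a else 0))"
    by (intro sum.cong) auto
  then show ?thesis using finite_supp by (simp add: sum.inter_filter flip: sum_distrib_left)
qed

lemma two_level_scaling:
  assumes \<kappa>: "\<And>a. \<kappa> a = (if P1 a then \<theta>1 * mu a else 0) + (if P2 a then \<theta>2 * mu a else 0)"
    and disj: "\<And>a. P1 a \<Longrightarrow> \<not> P2 a" and off_row: "\<And>a. P1 a \<or> P2 a \<Longrightarrow> F a \<noteq> 0"
    and \<theta>: "0 < \<theta>1" "\<theta>1 < 1" "0 < \<theta>2" "\<theta>2 < 1"
  shows "(\<Sum>a\<in>supp_seq mu. \<kappa> a * f a)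
      = \<theta>1 * (\<Sum>a\<in>{a\<in>supp_seq mu. P1 a}. mu a * f a) + \<theta>2 * (\<Sum>a\<in>{a\<in>supp_seq mu. P2 a}. mu a * f a)"
    and "\<forall>a. F a = 0 \<longrightarrow> \<kappa> a = 0"
    and "\<forall>a. 0 \<le> \<kappa> a \<and> \<kappa> a \<le> mu a"
    and "\<forall>a\<in>supp_seq mu. P1 a \<or> P2 a \<longrightarrow> 0 < \<kappa> a \<and> \<kappa> a < mu a"
proof -
  show "(\<Sum>a\<in>supp_seq mu. \<kappa> a * f a)
      = \<theta>1 * (\<Sum>a\<in>{a\<in>supp_seq mu. P1 a}. mu a * f a) + \<theta>2 * (\<Sum>a\<in>{a\<in>supp_seq mu. P2 a}. mu a * f a)"
    unfolding \<kappa> by (simp add: distrib_right sum.distrib scaled_restriction_sum)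
  have "\<kappa> a = 0" if "F a = 0" for a using off_row[of a] that unfolding \<kappa> by auto
  then show "\<forall>a. F a = 0 \<longrightarrow> \<kappa> a = 0" by blast
  have "0 \<le> \<kappa> a \<and> \<kappa> a \<le> mu a" for a
    using \<theta> disj[of a] nonneg[of a] mult_left_le_one_le[of "mu a"] unfolding \<kappa> by auto
  then show "\<forall>a. 0 \<le> \<kappa> a \<and> \<kappa> a \<le> mu a" by blast
  have "0 < \<kappa> a \<and> \<kappa> a < mu a" if "a \<in> supp_seq mu" "P1 a \<or> P2 a" for a
  proof -
    have "0 < mu a" using that(1) supp_pos by blast
    then have "0 < \<theta>1 * mu a" "\<theta>1 * mu a < mu a" "0 < \<theta>2 * mu a" "\<theta>2 * mu a < mu a"
      using \<theta> by simp_all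
    then show ?thesis using that(2) disj[of a] unfolding \<kappa> by auto
  qed
  then show "\<forall>a\<in>supp_seq mu. P1 a \<or> P2 a \<longrightarrow> 0 < \<kappa> a \<and> \<kappa> a < mu a" by blast
qed

text \<open>The part of a coefficient vector placed off the row F = 0. The remaining mass,
  between 1/2 and 1, is put on the row by spread_pair.\<close>

definition off_row_load :: "int \<Rightarrow> (int \<times> int \<Rightarrow> real) \<Rightarrow> bool" where
  "off_row_load j \<kappa> \<longleftrightarrow> (\<forall>a. F a = 0 \<longrightarrow> \<kappa> a = 0) \<and> (\<forall>a. 0 \<le> \<kappa> a \<and> \<kappa> a \<le> mu a) \<and>
     mass mu \<kappa> \<le> 1/2 \<and> moment mu \<kappa> F = of_int j"

definition horizontal_move :: "(int \<times> int) set \<Rightarrow> (int \<times> int \<Rightarrow> real) \<Rightarrow> bool" where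
  "horizontal_move T w \<longleftrightarrow> (\<forall>a. w a \<noteq> 0 \<longrightarrow> a \<in> T) \<and> mass mu w = 0 \<and> moment mu w F = 0 \<and> moment mu w G \<noteq> 0"

lemma horizontal_move_mono: "horizontal_move T w \<Longrightarrow> T \<subseteq> T' \<Longrightarrow> horizontal_move T' w"
  unfolding horizontal_move_def by blast

lemma horizontal_perturbation:
  assumes "\<forall>a. 0 \<le> \<kappa> a \<and> \<kappa> a \<le> mu a" and "horizontal_move {a. 0 < \<kappa> a \<and> \<kappa> a < mu a} w"
  obtains d where "\<forall>a. \<bar>d a\<bar> \<le> \<kappa> a \<and> \<bar>d a\<bar> \<le> mu a - \<kappa> a"
    "mass mu d = 0" "moment mu d F = 0" "0 < moment mu d G"
proof -
  have w: "\<forall>a. w a \<noteq> 0 \<longrightarrow> 0 < \<kappa> a \<and> \<kappa> a < mu a" "mass mu w = 0" "moment mu w F = 0" "moment mu w G \<noteq> 0"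
    using assms(2) unfolding horizontal_move_def by auto
  have "{a. w a \<noteq> 0} \<subseteq> supp_seq mu" using w(1) assms(1) supp_pos by fastforce
  then have "finite {a. w a \<noteq> 0}" using finite_supp finite_subset by blast
  moreover have "\<forall>a. 0 \<le> min (\<kappa> a) (mu a - \<kappa> a)" "\<forall>a. w a \<noteq> 0 \<longrightarrow> 0 < min (\<kappa> a) (mu a - \<kappa> a)"
    using assms(1) w(1) by simp_all
  ultimately obtain \<delta> where "0 < \<delta>" and \<delta>: "\<forall>a. \<delta> * \<bar>w a\<bar> \<le> min (\<kappa> a) (mu a - \<kappa> a)"
    by (rule exists_uniform_scale)
  define c where "c = \<delta> * sgn (moment mu w G)"
  show thesis
  proof (rule that[of "\<lambda>a. c * w a"])
    show "\<forall>a. \<bar>c * w a\<bar> \<le> \<kappa> a \<and> \<bar>c * w a\<bar> \<le> mu a - \<kappa> a"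
      using \<delta> w(4) \<open>0 < \<delta>\<close> unfolding c_def by (simp add: abs_mult abs_sgn_eq)
    show "mass mu (\<lambda>a. c * w a) = 0" "moment mu (\<lambda>a. c * w a) F = 0"
      using w(2,3) by (simp_all add: mass_cmult moment_cmult)
    show "0 < moment mu (\<lambda>a. c * w a) G"
    proof -
      have "sgn (moment mu w G) * moment mu w G = \<bar>moment mu w G\<bar>"
        by (cases "moment mu w G" "0::real" rule: linorder_cases) auto
      then show ?thesis using w(4) \<open>0 < \<delta>\<close> unfolding c_def by (simp add: moment_cmult mult.assoc)
    qed
  qed
qed

lemma row_completion:
  assumes load: "off_row_load j \<kappa>"
    and d: "\<forall>a. \<bar>d a\<bar> \<le> \<kappa> a \<and> \<bar>d a\<bar> \<le> mu a - \<kappa> a" "mass mu d = 0" "moment mu d F = 0"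
    and \<rho>: "\<forall>a\<in>{a\<in>supp_seq mu. F a = 0}. 0 \<le> \<rho> a \<and> \<rho> a \<le> mu a"
      "(\<Sum>a\<in>{a\<in>supp_seq mu. F a = 0}. \<rho> a) = 1 - mass mu \<kappa>"
    and "\<bar>e\<bar> \<le> 1"
  defines "\<nu> \<equiv> \<lambda>a. (if a \<in> {a\<in>supp_seq mu. F a = 0} then \<rho> a else 0) + \<kappa> a + e * d a"
  shows "feasible mu \<nu>" "moment mu \<nu> F = of_int j"
    "moment mu \<nu> G = (\<Sum>a\<in>{a\<in>supp_seq mu. F a = 0}. \<rho> a * of_int (G a)) + moment mu \<kappa> G + e * moment mu d G"
proof -
  define R where "R = {a\<in>supp_seq mu. F a = 0}"
  have "R \<subseteq> supp_seq mu" unfolding R_def by blast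
  have \<kappa>: "\<forall>a. F a = 0 \<longrightarrow> \<kappa> a = 0" "moment mu \<kappa> F = of_int j"
    using load unfolding off_row_load_def by auto
  have moment: "moment mu \<nu> f = (\<Sum>a\<in>R. \<rho> a * of_int (f a)) + moment mu \<kappa> f + e * moment mu d f" for f
    using sum_zero_extension[OF finite_supp \<open>R \<subseteq> _\<close>, of \<rho> "\<lambda>a. of_int (f a)"]
    unfolding \<nu>_def R_def[symmetric] by (simp add: moment_add moment_cmult, simp add: moment_def)
  then show "moment mu \<nu> G = (\<Sum>a\<in>{a\<in>supp_seq mu. F a = 0}. \<rho> a * of_int (G a)) + moment mu \<kappa> G + e * moment mu d G"
    unfolding R_def .
  have "(\<Sum>a\<in>R. \<rho> a * of_int (F a)) = 0" by (intro sum.neutral) (simp add: R_def)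
  then show "moment mu \<nu> F = of_int j" using moment[of F] \<kappa>(2) d(3) by simp
  have "0 \<le> \<nu> a \<and> \<nu> a \<le> mu a" for a
  proof (cases "F a = 0")
    case True
    then have \<kappa>0: "\<kappa> a = 0" using \<kappa>(1) by blast
    then have "d a = 0" using d(1) by (metis abs_le_zero_iff)
    show ?thesis
    proof (cases "a \<in> R")
      case True
      then have "0 \<le> \<rho> a \<and> \<rho> a \<le> mu a" using \<rho>(1) unfolding R_def by blast
      then show ?thesis using True \<kappa>0 \<open>d a = 0\<close> unfolding \<nu>_def R_def[symmetric] by simp
    next
      case False
      then show ?thesis using \<kappa>0 \<open>d a = 0\<close> nonneg[of a] unfolding \<nu>_def R_def[symmetric] by simp
    qed
  next
    case False
    have "\<bar>e * d a\<bar> \<le> \<bar>d a\<bar>" using \<open>\<bar>e\<bar> \<le> 1\<close> by (simp add: abs_mult mult_left_le_one_le)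
    moreover have "\<bar>d a\<bar> \<le> \<kappa> a" "\<bar>d a\<bar> \<le> mu a - \<kappa> a" using d(1) by blast+
    ultimately have "\<bar>e * d a\<bar> \<le> \<kappa> a" "\<bar>e * d a\<bar> \<le> mu a - \<kappa> a" by linarith+
    then show ?thesis using False unfolding \<nu>_def by (auto simp: abs_le_iff)
  qed
  moreover have "mass mu \<nu> = 1"
    using sum_zero_extension[OF finite_supp \<open>R \<subseteq> _\<close>, of \<rho> "\<lambda>_. 1"] \<rho>(2) d(2)
    unfolding \<nu>_def R_def[symmetric] by (simp add: mass_add mass_cmult, simp add: mass_def)
  ultimately show "feasible mu \<nu>" unfolding feasible_def by blast
qed

lemma horizontal_pair:
  assumes load: "off_row_load j \<kappa>"
    and d: "\<forall>a. \<bar>d a\<bar> \<le> \<kappa> a \<and> \<bar>d a\<bar> \<le> mu a - \<kappa> a"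
      "mass mu d = 0" "moment mu d F = 0" "0 < moment mu d G"
  obtains \<nu>1 \<nu>2 where "feasible mu \<nu>1" "feasible mu \<nu>2"
    "moment mu \<nu>1 F = of_int j" "moment mu \<nu>2 F = of_int j" "1 < moment mu \<nu>2 G - moment mu \<nu>1 G"
proof -
  define R where "R = {a\<in>supp_seq mu. F a = 0}"
  have "finite R" using finite_supp unfolding R_def by simp
  have "inj_on G R" using G_F_inj unfolding inj_on_def R_def by auto
  have "\<forall>a\<in>R. 0 \<le> mu a \<and> mu a \<le> 1/2" using nonneg half by auto
  have "0 \<le> mass mu \<kappa>" "mass mu \<kappa> \<le> 1/2"
    using load unfolding off_row_load_def mass_def by (auto intro: sum_nonneg)
  then obtain \<rho>1 \<rho>2 where \<rho>: "\<forall>a\<in>R. 0 \<le> \<rho>1 a \<and> \<rho>1 a \<le> mu a" "\<forall>a\<in>R. 0 \<le> \<rho>2 a \<and> \<rho>2 a \<le> mu a"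
    "(\<Sum>a\<in>R. \<rho>1 a) = 1 - mass mu \<kappa>" "(\<Sum>a\<in>R. \<rho>2 a) = 1 - mass mu \<kappa>"
    "1 \<le> (\<Sum>a\<in>R. \<rho>2 a * of_int (G a)) - (\<Sum>a\<in>R. \<rho>1 a * of_int (G a))"
    using spread_pair[OF \<open>finite R\<close> \<open>inj_on G R\<close> \<open>\<forall>a\<in>R. _\<close> row[folded R_def], of "1 - mass mu \<kappa>"]
    by auto
  note \<nu>1 = row_completion[OF load d(1-3) \<rho>(1,3)[unfolded R_def], of "-1"]
  note \<nu>2 = row_completion[OF load d(1-3) \<rho>(2,4)[unfolded R_def], of 1]
  have "1 < moment mu (\<lambda>a. (if a \<in> R then \<rho>2 a else 0) + \<kappa> a + 1 * d a) G
      - moment mu (\<lambda>a. (if a \<in> R then \<rho>1 a else 0) + \<kappa> a + - 1 * d a) G"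
    using \<nu>1(3) \<nu>2(3) \<rho>(5) d(4) unfolding R_def by simp
  then show thesis using \<nu>1(1,2) \<nu>2(1,2) unfolding R_def by (intro that) simp_all
qed

lemma moment_interior_of_load:
  assumes "off_row_load j \<kappa>" and "horizontal_move {a. 0 < \<kappa> a \<and> \<kappa> a < mu a} w"
    and "feasible mu \<nu>u" "feasible mu \<nu>d" "moment mu \<nu>d F < of_int j" "of_int j < moment mu \<nu>u F"
  shows "\<exists>n. moment_interior mu G F n j"
proof -
  have "\<forall>a. 0 \<le> \<kappa> a \<and> \<kappa> a \<le> mu a" using assms(1) unfolding off_row_load_def by blast
  then obtain d where "\<forall>a. \<bar>d a\<bar> \<le> \<kappa> a \<and> \<bar>d a\<bar> \<le> mu a - \<kappa> a"
    "mass mu d = 0" "moment mu d F = 0" "0 < moment mu d G"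
    using assms(2) by (rule horizontal_perturbation)
  then obtain \<nu>1 \<nu>2 where \<nu>: "feasible mu \<nu>1" "feasible mu \<nu>2"
    "moment mu \<nu>1 F = of_int j" "moment mu \<nu>2 F = of_int j" "1 < moment mu \<nu>2 G - moment mu \<nu>1 G"
    by (rule horizontal_pair[OF assms(1)])
  define n where "n = \<lfloor>moment mu \<nu>1 G\<rfloor> + 1"
  have "moment mu \<nu>1 G < of_int n" "of_int n < moment mu \<nu>2 G" using \<nu>(5) unfolding n_def by linarith+
  then have "moment_interior mu G F n j"
    using \<nu>(1-4) assms(3-6) by (intro moment_interior_if_surrounded)
  then show ?thesis ..
qed

lemma sum_delta_mult:
  fixes c :: real and f :: "int \<times> int \<Rightarrow> real"
  assumes "p \<in> supp_seq mu"
  shows "(\<Sum>a\<in>supp_seq mu. (if a = p then c else 0) * f a) = c * f p"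
proof -
  have "(\<Sum>a\<in>supp_seq mu. (if a = p then c else 0) * f a) = (\<Sum>a\<in>supp_seq mu. if a = p then c * f p else 0)"
    by (intro sum.cong) auto
  then show ?thesis using assms finite_supp by simp
qed

lemma horizontal_move_in_row:
  assumes "p \<in> T" "q \<in> T" "T \<subseteq> supp_seq mu" "p \<noteq> q" "F p = F q"
  obtains w where "horizontal_move T w"
proof
  define w where "w a = (if a = p then 1 else 0) + (if a = q then -1 else (0::real))" for a :: "int \<times> int"
  have "p \<in> supp_seq mu" "q \<in> supp_seq mu" using assms by auto
  then have sums: "(\<Sum>a\<in>supp_seq mu. w a * f a) = f p - f q" for f
    unfolding w_def by (simp add: distrib_right sum.distrib sum_delta_mult)
  have "G p \<noteq> G q" using G_F_inj assms(4,5) by blast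
  then show "horizontal_move T w"
    using sums[of "\<lambda>_. 1"] sums[of "\<lambda>a. of_int (F a)"] sums[of "\<lambda>a. of_int (G a)"] assms(1,2,5)
    unfolding horizontal_move_def mass_def moment_def w_def by auto
qed

lemma horizontal_move_if_heavy:
  assumes "T \<subseteq> supp_seq mu" and "3/2 < (\<Sum>a\<in>T. mu a)"
  obtains w where "horizontal_move T w"
proof -
  have "mu a \<le> 3/2" for a using half[of a] by simp
  then have "\<forall>a\<in>T. mu a \<le> 3/2" by blast
  moreover have "(0::real) \<le> 3/2" by simp
  ultimately obtain p q where "p \<in> T" "q \<in> T" "p \<noteq> q"
    using assms(2) by (metis two_points_if_heavy)
  define \<alpha> \<beta> where "\<alpha> = real_of_int (F q - F p)" and "\<beta> = real_of_int (G p - G q)"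
  have "G p \<noteq> G q \<or> F p \<noteq> F q" using G_F_inj \<open>p \<noteq> q\<close> by blast
  then have "(\<alpha>, \<beta>) \<noteq> (0, 0)" unfolding \<alpha>_def \<beta>_def by auto
  define \<gamma> where "\<gamma> = \<alpha> * of_int (G p) + \<beta> * of_int (F p)"
  have "\<exists>r\<in>T. \<alpha> * of_int (G r) + \<beta> * of_int (F r) \<noteq> \<gamma>"
  proof (rule ccontr)
    assume "\<not> ?thesis"
    then have "T \<subseteq> {a\<in>supp_seq mu. \<alpha> * of_int (G a) + \<beta> * of_int (F a) = \<gamma>}" using assms(1) by auto
    then have "(\<Sum>a\<in>T. mu a) \<le> (\<Sum>a\<in>{a\<in>supp_seq mu. \<alpha> * of_int (G a) + \<beta> * of_int (F a) = \<gamma>}. mu a)"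
      using finite_supp nonneg by (intro sum_mono2) auto
    then show False using lines[OF \<open>(\<alpha>, \<beta>) \<noteq> (0, 0)\<close>, of \<gamma>] assms(2) by simp
  qed
  then obtain r where "r \<in> T" and off_line: "\<alpha> * of_int (G r) + \<beta> * of_int (F r) \<noteq> \<gamma>" by blast
  define w :: "int \<times> int \<Rightarrow> real" where "w a = (if a = p then of_int (F r - F q) else 0) + (if a = q then of_int (F p - F r) else 0)
      + (if a = r then of_int (F q - F p) else 0)" for a
  have "p \<in> supp_seq mu" "q \<in> supp_seq mu" "r \<in> supp_seq mu" using assms(1) \<open>p \<in> T\<close> \<open>q \<in> T\<close> \<open>r \<in> T\<close> by auto
  then have sums: "(\<Sum>a\<in>supp_seq mu. w a * f a)
      = of_int (F r - F q) * f p + of_int (F p - F r) * f q + of_int (F q - F p) * f r" for f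
    unfolding w_def by (simp add: distrib_right sum.distrib sum_delta_mult)
  have "mass mu w = 0" "moment mu w F = 0" using sums[of "\<lambda>_. 1"] sums[of "\<lambda>a. of_int (F a)"]
    unfolding mass_def moment_def by (simp_all add: algebra_simps)
  moreover have "moment mu w G = \<alpha> * of_int (G r) + \<beta> * of_int (F r) - \<gamma>"
    using sums[of "\<lambda>a. of_int (G a)"] unfolding moment_def \<alpha>_def \<beta>_def \<gamma>_def by (simp add: algebra_simps)
  moreover have "\<forall>a. w a \<noteq> 0 \<longrightarrow> a \<in> T" using \<open>p \<in> T\<close> \<open>q \<in> T\<close> \<open>r \<in> T\<close> unfolding w_def by auto
  ultimately have "horizontal_move T w" using off_line unfolding horizontal_move_def by simp
  then show thesis by (rule that)
qed


lemma off_row_mass_gt_2: "2 < (\<Sum>a\<in>{a\<in>supp_seq mu. F a \<noteq> 0}. mu a)"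
  using sum_filter_split[OF finite_supp, of mu "\<lambda>a. F a = 0"] row total_mass_gt by simp

lemma row_mass_le: "{a\<in>supp_seq mu. F a = 0} \<subseteq> T \<Longrightarrow> T \<subseteq> supp_seq mu \<Longrightarrow> 3/2 \<le> (\<Sum>a\<in>T. mu a)"
  using sum_mono2[of T "{a\<in>supp_seq mu. F a = 0}" mu] finite_supp finite_subset nonneg row by auto

lemma two_sided_load:
  assumes "u \<in> supp_seq mu" "0 < F u" and "v \<in> supp_seq mu" "F v < 0"
  obtains \<kappa> where "off_row_load 0 \<kappa>" "\<forall>a\<in>supp_seq mu. F a \<noteq> 0 \<longrightarrow> 0 < \<kappa> a \<and> \<kappa> a < mu a"
proof -
  define U D where "U = {a\<in>supp_seq mu. 0 < F a}" and "D = {a\<in>supp_seq mu. F a < 0}"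
  define YU YD where "YU = (\<Sum>a\<in>U. mu a * of_int (F a))" and "YD = (\<Sum>a\<in>D. mu a * of_int (- F a))"
  have "finite U" "finite D" using finite_supp unfolding U_def D_def by auto
  have "0 < YU" unfolding YU_def
    using \<open>finite U\<close> assms(1,2) supp_pos nonneg by (intro sum_pos2[of _ u]) (auto simp: U_def)
  have "0 < YD" unfolding YD_def
    using \<open>finite D\<close> assms(3,4) supp_pos nonneg by (intro sum_pos2[of _ v]) (auto simp: D_def mult_le_0_iff mult_pos_neg)
  have "(\<Sum>a\<in>U. mu a) \<le> YU" unfolding YU_def
  proof (rule sum_mono)
    fix a assume "a \<in> U"
    then show "mu a \<le> mu a * of_int (F a)" using nonneg[of a] by (simp add: U_def mult_le_cancel_left1)
  qed
  have "(\<Sum>a\<in>D. mu a) \<le> YD" unfolding YD_def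
  proof (rule sum_mono)
    fix a assume "a \<in> D"
    then have "1 \<le> real_of_int (- F a)" by (simp add: D_def)
    then show "mu a \<le> mu a * of_int (- F a)" using mult_left_mono[OF _ nonneg[of a]] by fastforce
  qed
  define \<epsilon> where "\<epsilon> = min 1 (min YU YD) / 4"
  define \<theta>U \<theta>D where "\<theta>U = \<epsilon> / YU" and "\<theta>D = \<epsilon> / YD"
  have \<theta>: "0 < \<theta>U" "\<theta>U < 1" "0 < \<theta>D" "\<theta>D < 1"
    using \<open>0 < YU\<close> \<open>0 < YD\<close> unfolding \<theta>U_def \<theta>D_def \<epsilon>_def by (auto simp: divide_less_eq min_def)
  define \<kappa> where "\<kappa> a = (if 0 < F a then \<theta>U * mu a else 0) + (if F a < 0 then \<theta>D * mu a else 0)" for a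
  have "\<And>a. 0 < F a \<Longrightarrow> \<not> F a < 0" "\<And>a. 0 < F a \<or> F a < 0 \<Longrightarrow> F a \<noteq> 0" by auto
  note scaling = two_level_scaling[OF \<kappa>_def this \<theta>, folded U_def D_def]
  have "mass mu \<kappa> = \<theta>U * (\<Sum>a\<in>U. mu a) + \<theta>D * (\<Sum>a\<in>D. mu a)"
    using scaling(1)[of "\<lambda>_. 1"] unfolding mass_def by simp
  also have "\<dots> \<le> \<theta>U * YU + \<theta>D * YD"
    using \<theta> \<open>(\<Sum>a\<in>U. mu a) \<le> YU\<close> \<open>(\<Sum>a\<in>D. mu a) \<le> YD\<close> by (intro add_mono mult_left_mono) auto
  also have "\<dots> \<le> 1/2" using \<open>0 < YU\<close> \<open>0 < YD\<close> unfolding \<theta>U_def \<theta>D_def \<epsilon>_def by simp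
  finally have "mass mu \<kappa> \<le> 1/2" .
  moreover have "moment mu \<kappa> F = 0"
    using scaling(1)[of "\<lambda>a. of_int (F a)"] \<open>0 < YU\<close> \<open>0 < YD\<close>
    unfolding moment_def \<theta>U_def \<theta>D_def YU_def YD_def by (simp add: sum_negf)
  ultimately have "off_row_load 0 \<kappa>" using scaling(2,3) unfolding off_row_load_def of_int_0 by blast
  moreover have "\<forall>a\<in>supp_seq mu. F a \<noteq> 0 \<longrightarrow> 0 < \<kappa> a \<and> \<kappa> a < mu a"
    using scaling(4) by (simp add: neq_iff)
  ultimately show thesis by (rule that)
qed

lemma moment_interior_two_sided:
  assumes "u \<in> supp_seq mu" "0 < F u" and "v \<in> supp_seq mu" "F v < 0"
  shows "\<exists>n j. moment_interior mu G F n j"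
proof -
  obtain \<kappa> where \<kappa>: "off_row_load 0 \<kappa>" "\<forall>a\<in>supp_seq mu. F a \<noteq> 0 \<longrightarrow> 0 < \<kappa> a \<and> \<kappa> a < mu a"
    using assms by (rule two_sided_load)
  have "3/2 < (\<Sum>a\<in>{a\<in>supp_seq mu. F a \<noteq> 0}. mu a)" using off_row_mass_gt_2 by simp
  then obtain w where "horizontal_move {a\<in>supp_seq mu. F a \<noteq> 0} w"
    by (rule horizontal_move_if_heavy[rotated]) auto
  then have w: "horizontal_move {a. 0 < \<kappa> a \<and> \<kappa> a < mu a} w"
    by (rule horizontal_move_mono) (use \<kappa>(2) in auto)
  define Tu Td where "Tu = {a\<in>supp_seq mu. 0 \<le> F a}" and "Td = {a\<in>supp_seq mu. F a \<le> 0}"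
  have "Tu \<subseteq> supp_seq mu" "Td \<subseteq> supp_seq mu" "finite Tu" "finite Td"
    using finite_supp unfolding Tu_def Td_def by auto
  have "3/2 \<le> (\<Sum>a\<in>Tu. mu a)" "3/2 \<le> (\<Sum>a\<in>Td. mu a)"
    by (rule row_mass_le; auto simp: Tu_def Td_def)+
  then have "1 \<le> (\<Sum>a\<in>Tu. mu a)" "1 \<le> (\<Sum>a\<in>Td. mu a)" by linarith+
  obtain \<nu>u where "feasible mu \<nu>u" and \<nu>u: "moment mu \<nu>u F = (\<Sum>a\<in>Tu. mu a * of_int (F a)) / (\<Sum>a\<in>Tu. mu a)"
    by (rule exists_feasible_average[OF real_seq \<open>Tu \<subseteq> _\<close> \<open>1 \<le> (\<Sum>a\<in>Tu. mu a)\<close>])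
  obtain \<nu>d where "feasible mu \<nu>d" and \<nu>d: "moment mu \<nu>d F = (\<Sum>a\<in>Td. mu a * of_int (F a)) / (\<Sum>a\<in>Td. mu a)"
    by (rule exists_feasible_average[OF real_seq \<open>Td \<subseteq> _\<close> \<open>1 \<le> (\<Sum>a\<in>Td. mu a)\<close>])
  have "0 < (\<Sum>a\<in>Tu. mu a * of_int (F a))"
    using \<open>finite Tu\<close> assms(1,2) supp_pos nonneg by (intro sum_pos2[of _ u]) (auto simp: Tu_def)
  moreover have "0 < (\<Sum>a\<in>Td. mu a * of_int (- F a))"
    using \<open>finite Td\<close> assms(3,4) supp_pos nonneg
    by (intro sum_pos2[of _ v]) (auto simp: Td_def mult_le_0_iff mult_pos_neg)
  moreover note \<open>1 \<le> (\<Sum>a\<in>Tu. mu a)\<close> \<open>1 \<le> (\<Sum>a\<in>Td. mu a)\<close>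
  ultimately have "moment mu \<nu>d F < of_int 0" "of_int 0 < moment mu \<nu>u F"
    unfolding \<nu>u \<nu>d by (simp_all add: sum_negf divide_neg_pos)
  then show ?thesis using moment_interior_of_load[OF \<kappa>(1) w \<open>feasible mu \<nu>u\<close> \<open>feasible mu \<nu>d\<close>] by blast
qed


lemma one_sided_row_masses:
  assumes "\<forall>a\<in>supp_seq mu. 0 \<le> F a"
  shows "(\<Sum>a\<in>{a\<in>supp_seq mu. F a = 1}. mu a) \<le> 3/2"
    and "{a\<in>supp_seq mu. F a \<noteq> 0} = {a\<in>supp_seq mu. 1 \<le> F a}"
    and "1/2 < (\<Sum>a\<in>{a\<in>supp_seq mu. 2 \<le> F a}. mu a)"
proof -
  have "{a\<in>supp_seq mu. 0 * of_int (G a) + 1 * of_int (F a) = (1::real)} = {a\<in>supp_seq mu. F a = 1}" by auto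
  then show row1: "(\<Sum>a\<in>{a\<in>supp_seq mu. F a = 1}. mu a) \<le> 3/2" using lines[of 0 1 1] by simp
  show "{a\<in>supp_seq mu. F a \<noteq> 0} = {a\<in>supp_seq mu. 1 \<le> F a}" using assms by force
  have "{a\<in>{a\<in>supp_seq mu. F a \<noteq> 0}. F a = 1} = {a\<in>supp_seq mu. F a = 1}"
    and "{a\<in>{a\<in>supp_seq mu. F a \<noteq> 0}. F a \<noteq> 1} = {a\<in>supp_seq mu. 2 \<le> F a}" using assms by force+
  then show "1/2 < (\<Sum>a\<in>{a\<in>supp_seq mu. 2 \<le> F a}. mu a)"
    using sum_filter_split[of "{a\<in>supp_seq mu. F a \<noteq> 0}" mu "\<lambda>a. F a = 1"] finite_supp off_row_mass_gt_2 row1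
    by simp
qed

lemma one_sided_load_tall:
  assumes "\<forall>a\<in>supp_seq mu. 0 \<le> F a" and "t \<in> supp_seq mu" "3 \<le> F t"
  obtains \<kappa> where "off_row_load 1 \<kappa>" "\<forall>a\<in>supp_seq mu. 1 \<le> F a \<longrightarrow> 0 < \<kappa> a \<and> \<kappa> a < mu a"
proof -
  define R1 B where "R1 = {a\<in>supp_seq mu. F a = 1}" and "B = {a\<in>supp_seq mu. 2 \<le> F a}"
  define m1 m2 Y where "m1 = (\<Sum>a\<in>R1. mu a)" and "m2 = (\<Sum>a\<in>B. mu a)" and "Y = (\<Sum>a\<in>B. mu a * of_int (F a))"
  have "0 \<le> m1" unfolding m1_def using nonneg by (simp add: sum_nonneg)
  have "m1 \<le> 3/2" "1/2 < m2" using one_sided_row_masses[OF assms(1)] unfolding m1_def m2_def R1_def B_def by simp_all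
  have "Y - 2 * m2 = (\<Sum>a\<in>B. mu a * (of_int (F a) - 2))"
    unfolding Y_def m2_def by (simp add: algebra_simps sum_subtractf flip: sum_distrib_right)
  also have "0 < \<dots>"
  proof (rule sum_pos2[of _ t])
    show "finite B" using finite_supp unfolding B_def by simp
  qed (use assms(2,3) supp_pos nonneg in \<open>auto simp: B_def\<close>)
  finally have "2 * m2 < Y" by simp
  define \<rho> where "\<rho> = m2 / Y"
  define \<theta>2 where "\<theta>2 = (1/2 - \<rho>) / 2"
  define \<theta>1 where "\<theta>1 = (1 - \<theta>2 * m1) / Y"
  have "0 < \<rho>" "\<rho> < 1/2" using \<open>1/2 < m2\<close> \<open>2 * m2 < Y\<close> unfolding \<rho>_def by (simp_all add: field_simps)
  then have "0 < \<theta>2" "\<theta>2 < 1" unfolding \<theta>2_def by simp_all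
  have "\<theta>2 * m1 \<le> \<theta>2 * (3/2)" using \<open>0 < \<theta>2\<close> \<open>m1 \<le> 3/2\<close> by simp
  moreover have "0 \<le> \<theta>2 * m1" and "\<theta>2 < 1/4" using \<open>0 < \<theta>2\<close> \<open>0 \<le> m1\<close> \<open>0 < \<rho>\<close> unfolding \<theta>2_def by simp_all
  ultimately have "0 < 1 - \<theta>2 * m1" "1 - \<theta>2 * m1 \<le> 1" by linarith+
  moreover have "1 < Y" using \<open>1/2 < m2\<close> \<open>2 * m2 < Y\<close> by linarith
  ultimately have "0 < \<theta>1" "\<theta>1 < 1" unfolding \<theta>1_def by (simp_all add: divide_less_eq)
  define \<kappa> where "\<kappa> a = (if 2 \<le> F a then \<theta>1 * mu a else 0) + (if F a = 1 then \<theta>2 * mu a else 0)" for a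
  have "\<And>a. 2 \<le> F a \<Longrightarrow> F a \<noteq> 1" "\<And>a. 2 \<le> F a \<or> F a = 1 \<Longrightarrow> F a \<noteq> 0" by auto
  note scaling = two_level_scaling[OF \<kappa>_def this \<open>0 < \<theta>1\<close> \<open>\<theta>1 < 1\<close> \<open>0 < \<theta>2\<close> \<open>\<theta>2 < 1\<close>,
      folded B_def R1_def]
  have "mass mu \<kappa> = \<theta>2 * m1 + \<theta>1 * m2" using scaling(1)[of "\<lambda>_. 1"] unfolding mass_def m1_def m2_def by simp
  also have "\<dots> = \<rho> + \<theta>2 * m1 - \<theta>2 * m1 * \<rho>"
    using \<open>2 * m2 < Y\<close> \<open>1/2 < m2\<close> unfolding \<theta>1_def \<rho>_def by (simp add: field_simps)
  also have "\<dots> \<le> \<rho> + \<theta>2 * (3/2)"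
    using \<open>\<theta>2 * m1 \<le> \<theta>2 * (3/2)\<close> mult_nonneg_nonneg[OF \<open>0 \<le> \<theta>2 * m1\<close> less_imp_le[OF \<open>0 < \<rho>\<close>]]
    by linarith
  also have "\<dots> \<le> 1/2"
  proof -
    have "\<theta>2 * (3/2) = 3/8 - 3/4 * \<rho>" unfolding \<theta>2_def by (simp add: field_simps)
    then show ?thesis using \<open>\<rho> < 1/2\<close> by linarith
  qed
  finally have "mass mu \<kappa> \<le> 1/2" .
  moreover have "(\<Sum>a\<in>R1. mu a * of_int (F a)) = m1" unfolding m1_def R1_def by simp
  then have "moment mu \<kappa> F = 1"
    using scaling(1)[of "\<lambda>a. of_int (F a)"] \<open>2 * m2 < Y\<close> \<open>1/2 < m2\<close>
    unfolding moment_def \<theta>1_def Y_def[symmetric] by simp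
  ultimately have "off_row_load 1 \<kappa>" using scaling(2,3) unfolding off_row_load_def of_int_1 by blast
  moreover have "\<forall>a\<in>supp_seq mu. 1 \<le> F a \<longrightarrow> 0 < \<kappa> a \<and> \<kappa> a < mu a"
    using scaling(4) by force
  ultimately show thesis by (rule that)
qed

lemma one_sided_load_flat:
  assumes "\<forall>a\<in>supp_seq mu. 0 \<le> F a \<and> F a \<le> 2"
  obtains \<kappa> w where "off_row_load 1 \<kappa>" "horizontal_move {a. 0 < \<kappa> a \<and> \<kappa> a < mu a} w"
proof -
  define B where "B = {a\<in>supp_seq mu. F a = 2}"
  have "B = {a\<in>supp_seq mu. 2 \<le> F a}" using assms unfolding B_def by force
  moreover have "\<forall>a\<in>supp_seq mu. 0 \<le> F a" using assms by blast
  ultimately have "1/2 < (\<Sum>a\<in>B. mu a)" using one_sided_row_masses(3) by simp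
  define \<theta> where "\<theta> = 1 / (2 * (\<Sum>a\<in>B. mu a))"
  have "0 < \<theta>" "\<theta> < 1" using \<open>1/2 < _\<close> unfolding \<theta>_def by (simp_all add: field_simps)
  define \<kappa> where "\<kappa> a = (if F a = 2 then \<theta> * mu a else 0)" for a
  have sums: "(\<Sum>a\<in>supp_seq mu. \<kappa> a * f a) = \<theta> * (\<Sum>a\<in>B. mu a * f a)" for f
    unfolding \<kappa>_def B_def by (rule scaled_restriction_sum)
  have "(\<Sum>a\<in>B. mu a * of_int (F a)) = (\<Sum>a\<in>B. 2 * mu a)"
    by (intro sum.cong) (auto simp: B_def)
  then have "(\<Sum>a\<in>B. mu a * of_int (F a)) = 2 * (\<Sum>a\<in>B. mu a)"
    by (simp add: sum_distrib_left)
  then have "mass mu \<kappa> \<le> 1/2" "moment mu \<kappa> F = 1"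
    using sums[of "\<lambda>_. 1"] sums[of "\<lambda>a. of_int (F a)"] \<open>1/2 < _\<close>
    unfolding mass_def moment_def \<theta>_def by simp_all
  moreover have "0 \<le> \<kappa> a \<and> \<kappa> a \<le> mu a" for a
    using \<open>0 < \<theta>\<close> \<open>\<theta> < 1\<close> nonneg[of a] mult_left_le_one_le[of "mu a"] unfolding \<kappa>_def by auto
  then have "\<forall>a. 0 \<le> \<kappa> a \<and> \<kappa> a \<le> mu a" by blast
  moreover have "\<forall>a. F a = 0 \<longrightarrow> \<kappa> a = 0" unfolding \<kappa>_def by simp
  ultimately have "off_row_load 1 \<kappa>" unfolding off_row_load_def of_int_1 by blast
  have "\<forall>a\<in>B. mu a \<le> 1/2" using half by blast
  obtain p q where "p \<in> B" "q \<in> B" "p \<noteq> q"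
    by (rule two_points_if_heavy[OF _ \<open>\<forall>a\<in>B. mu a \<le> 1/2\<close> \<open>1/2 < _\<close>]) simp
  have "B \<subseteq> supp_seq mu" "F p = F q" using \<open>p \<in> B\<close> \<open>q \<in> B\<close> unfolding B_def by auto
  obtain w where "horizontal_move B w"
    by (rule horizontal_move_in_row[OF \<open>p \<in> B\<close> \<open>q \<in> B\<close> \<open>B \<subseteq> _\<close> \<open>p \<noteq> q\<close> \<open>F p = F q\<close>])
  moreover have "B \<subseteq> {a. 0 < \<kappa> a \<and> \<kappa> a < mu a}"
  proof
    fix a assume "a \<in> B"
    then have "0 < mu a" "F a = 2" using supp_pos unfolding B_def by auto
    then show "a \<in> {a. 0 < \<kappa> a \<and> \<kappa> a < mu a}" using \<open>0 < \<theta>\<close> \<open>\<theta> < 1\<close> unfolding \<kappa>_def by simp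
  qed
  ultimately have "horizontal_move {a. 0 < \<kappa> a \<and> \<kappa> a < mu a} w" by (rule horizontal_move_mono)
  with \<open>off_row_load 1 \<kappa>\<close> show thesis by (rule that)
qed

text \<open>If no point lies above row 2, a load of F-moment 1 and mass at most 1/2 must sit on row 2
  with mass exactly 1/2, so it leaves no slack on row 1 and the horizontal move has to use two
  points of row 2.\<close>

lemma one_sided_load:
  assumes "\<forall>a\<in>supp_seq mu. 0 \<le> F a"
  obtains \<kappa> w where "off_row_load 1 \<kappa>" "horizontal_move {a. 0 < \<kappa> a \<and> \<kappa> a < mu a} w"
proof (cases "\<exists>t\<in>supp_seq mu. 3 \<le> F t")
  case True
  then obtain t where "t \<in> supp_seq mu" "3 \<le> F t" by blast
  then obtain \<kappa> where \<kappa>: "off_row_load 1 \<kappa>" "\<forall>a\<in>supp_seq mu. 1 \<le> F a \<longrightarrow> 0 < \<kappa> a \<and> \<kappa> a < mu a"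
    by (rule one_sided_load_tall[OF assms])
  have "3/2 < (\<Sum>a\<in>{a\<in>supp_seq mu. 1 \<le> F a}. mu a)"
    using off_row_mass_gt_2 one_sided_row_masses(2)[OF assms] by simp
  then obtain w where "horizontal_move {a\<in>supp_seq mu. 1 \<le> F a} w"
    by (rule horizontal_move_if_heavy[rotated]) auto
  then have "horizontal_move {a. 0 < \<kappa> a \<and> \<kappa> a < mu a} w"
    by (rule horizontal_move_mono) (use \<kappa>(2) in auto)
  with \<kappa>(1) show thesis by (rule that)
next
  case False
  then have "\<forall>a\<in>supp_seq mu. 0 \<le> F a \<and> F a \<le> 2" using assms by force
  then show thesis using that by (rule one_sided_load_flat)
qed

lemma moment_interior_one_sided:
  assumes "\<forall>a\<in>supp_seq mu. 0 \<le> F a"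
  shows "\<exists>n j. moment_interior mu G F n j"
proof -
  obtain \<kappa> w where \<kappa>: "off_row_load 1 \<kappa>" "horizontal_move {a. 0 < \<kappa> a \<and> \<kappa> a < mu a} w"
    using assms by (rule one_sided_load)
  define R0 T1 where "R0 = {a\<in>supp_seq mu. F a = 0}" and "T1 = {a\<in>supp_seq mu. 1 \<le> F a}"
  have "R0 \<subseteq> supp_seq mu" "T1 \<subseteq> supp_seq mu" "finite T1" using finite_supp unfolding R0_def T1_def by auto
  have "1 \<le> (\<Sum>a\<in>R0. mu a)" using row unfolding R0_def by simp
  have "2 < (\<Sum>a\<in>T1. mu a)" using off_row_mass_gt_2 one_sided_row_masses(2)[OF assms] unfolding T1_def by simp
  then have "1 \<le> (\<Sum>a\<in>T1. mu a)" by simp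
  obtain \<nu>d where "feasible mu \<nu>d" and \<nu>d: "moment mu \<nu>d F = (\<Sum>a\<in>R0. mu a * of_int (F a)) / (\<Sum>a\<in>R0. mu a)"
    by (rule exists_feasible_average[OF real_seq \<open>R0 \<subseteq> _\<close> \<open>1 \<le> (\<Sum>a\<in>R0. mu a)\<close>])
  obtain \<nu>u where "feasible mu \<nu>u" and \<nu>u: "moment mu \<nu>u F = (\<Sum>a\<in>T1. mu a * of_int (F a)) / (\<Sum>a\<in>T1. mu a)"
    by (rule exists_feasible_average[OF real_seq \<open>T1 \<subseteq> _\<close> \<open>1 \<le> (\<Sum>a\<in>T1. mu a)\<close>])
  have "moment mu \<nu>d F < of_int 1" unfolding \<nu>d R0_def by simp
  have "{a\<in>supp_seq mu. 2 \<le> F a} \<noteq> {}"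
  proof
    assume empty: "{a\<in>supp_seq mu. 2 \<le> F a} = {}"
    from one_sided_row_masses(3)[OF assms] show False unfolding empty by simp
  qed
  then obtain t where "t \<in> supp_seq mu" "2 \<le> F t" by blast
  then have "0 < (\<Sum>a\<in>T1. mu a * (of_int (F a) - 1))"
    using \<open>finite T1\<close> supp_pos nonneg by (intro sum_pos2[of _ t]) (auto simp: T1_def)
  then have "(\<Sum>a\<in>T1. mu a) < (\<Sum>a\<in>T1. mu a * of_int (F a))"
    by (simp add: algebra_simps sum_subtractf)
  then have "of_int 1 < moment mu \<nu>u F" unfolding \<nu>u using \<open>1 \<le> (\<Sum>a\<in>T1. mu a)\<close> by simp
  with \<open>moment mu \<nu>d F < of_int 1\<close> have "\<exists>n. moment_interior mu G F n 1"
    by (rule moment_interior_of_load[OF \<kappa> \<open>feasible mu \<nu>u\<close> \<open>feasible mu \<nu>d\<close>])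
  then show ?thesis by blast
qed

lemma framed_seq_mirror: "framed_seq mu (\<lambda>a. - G a) (\<lambda>a. - F a)"
proof
  fix \<alpha> \<beta> \<gamma> :: real
  assume "(\<alpha>, \<beta>) \<noteq> (0, 0)"
  then have "(- \<alpha>, - \<beta>) \<noteq> (0, 0)" by simp
  then show "(\<Sum>a\<in>{a\<in>supp_seq mu. \<alpha> * of_int (- G a) + \<beta> * of_int (- F a) = \<gamma>}. mu a) \<le> 3/2"
    using lines[of "- \<alpha>" "- \<beta>" \<gamma>] by simp
qed (use real_seq half heavy G_F_inj row in auto)

theorem exists_moment_interior: "\<exists>n j. moment_interior mu G F n j"
proof (cases "\<forall>a\<in>supp_seq mu. 0 \<le> F a")
  case True
  then show ?thesis by (rule moment_interior_one_sided)
next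
  case not_up: False
  show ?thesis
  proof (cases "\<forall>a\<in>supp_seq mu. F a \<le> 0")
    case True
    interpret mirror: framed_seq mu "\<lambda>a. - G a" "\<lambda>a. - F a" by (rule framed_seq_mirror)
    have "\<forall>a\<in>supp_seq mu. 0 \<le> - F a" using True by simp
    then obtain n j where "moment_interior mu (\<lambda>a. - G a) (\<lambda>a. - F a) n j"
      using mirror.moment_interior_one_sided by blast
    then show ?thesis using moment_interior_mirror by blast
  next
    case False
    then have "\<exists>u\<in>supp_seq mu. 0 < F u" "\<exists>v\<in>supp_seq mu. F v < 0" using not_up by (simp_all add: not_le)
    then obtain u v where "u \<in> supp_seq mu" "0 < F u" "v \<in> supp_seq mu" "F v < 0" by blast
    then show ?thesis by (rule moment_interior_two_sided)
  qed
qed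

end

lemma (in unimodular_frame) framed_seq_if_heavy_line:
  assumes "real_seq mu" "\<forall>a. mu a \<le> 1/2" "7/2 < seq_size mu"
    and lines: "\<forall>L. is_line L \<longrightarrow> points_in mu L \<le> 3/2"
    and "is_line L" "points_in mu L = 3/2" "emb p \<in> L" "emb q \<in> L" "q \<noteq> p" "F q = 0"
  shows "framed_seq mu G F"
proof -
  have level_sets: "(\<Sum>a\<in>{a\<in>supp_seq mu. \<alpha> * of_int (G a) + \<beta> * of_int (F a) = \<gamma>}. mu a) \<le> 3/2"
    if ab: "(\<alpha>, \<beta>) \<noteq> (0, 0)" for \<alpha> \<beta> \<gamma> :: real
  proof -
    obtain L' where "is_line L'" and L': "\<And>a. emb a \<in> L' \<longleftrightarrow> \<alpha> * of_int (G a) + \<beta> * of_int (F a) = \<gamma>"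
      using level_set_is_line[OF ab] by blast
    then have "(\<Sum>a\<in>{a\<in>supp_seq mu. \<alpha> * of_int (G a) + \<beta> * of_int (F a) = \<gamma>}. mu a) = points_in mu L'"
      unfolding points_in_def by simp
    then show ?thesis using lines \<open>is_line L'\<close> by simp
  qed
  have "{a\<in>supp_seq mu. emb a \<in> L} \<subseteq> {a\<in>supp_seq mu. F a = 0}"
    using F_vanishes_on_line[OF assms(5,7,8) _ assms(9,10)] by blast
  then have "points_in mu L \<le> (\<Sum>a\<in>{a\<in>supp_seq mu. F a = 0}. mu a)"
    unfolding points_in_def using assms(1) unfolding real_seq_def supp_seq_def
    by (intro sum_mono2) auto
  moreover have "(\<Sum>a\<in>{a\<in>supp_seq mu. F a = 0}. mu a) \<le> 3/2"
    using level_sets[of 0 1 0] by simp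
  ultimately have "(\<Sum>a\<in>{a\<in>supp_seq mu. F a = 0}. mu a) = 3/2" using assms(6) by simp
  then show ?thesis
    using assms(1-3) level_sets G_F_inj by unfold_locales blast+
qed

theorem lemma3p4:
  fixes mu :: "int \<times> int \<Rightarrow> real"
  assumes "real_seq mu"
    and "seq_size mu = 3.99"
    and "\<forall>a. mu a \<le> 1/2"
    and "\<forall>L. is_line L \<longrightarrow> points_in mu L \<le> 3/2"
    and "\<exists>L. is_line L \<and> points_in mu L = 3/2"
  shows "\<exists>z::int \<times> int. emb z \<in> interior (Sigma1R mu)"
proof -
  obtain L where L: "is_line L" "points_in mu L = 3/2" using assms(5) by blast
  have "\<forall>a\<in>{a\<in>supp_seq mu. emb a \<in> L}. mu a \<le> 1/2" using assms(3) by blast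
  moreover have "1/2 < (\<Sum>a\<in>{a\<in>supp_seq mu. emb a \<in> L}. mu a)" using L(2) unfolding points_in_def by simp
  ultimately obtain p q where "p \<in> {a\<in>supp_seq mu. emb a \<in> L}" "q \<in> {a\<in>supp_seq mu. emb a \<in> L}" "p \<noteq> q"
    by (rule two_points_if_heavy[rotated]) auto
  then have "p \<noteq> q" "emb p \<in> L" "emb q \<in> L" by auto
  then have "(fst q - fst p, snd q - snd p) \<noteq> (0, 0)" by (cases p, cases q) auto
  then obtain g v1 v2 x y where d: "fst q - fst p = g * v1" "snd q - snd p = g * v2"
    and "x * v1 + y * v2 = 1" by (rule primitive_direction)
  interpret unimodular_frame p v1 v2 x y by unfold_locales fact
  have "F q = 0" unfolding F_def d by (simp add: algebra_simps)
  have "framed_seq mu G F"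
    using assms(1,3,4) L \<open>emb p \<in> L\<close> \<open>emb q \<in> L\<close> \<open>p \<noteq> q\<close> \<open>F q = 0\<close> assms(2)
    by (intro framed_seq_if_heavy_line) auto
  then obtain n j where "moment_interior mu G F n j" using framed_seq.exists_moment_interior by blast
  moreover obtain z where "G z = n" "F z = j" by (rule exists_point_with_coords)
  ultimately show ?thesis using emb_in_interior_Sigma1R by blast
qed

end
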